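(* Let $\mathcal{H}$ be a collection of nonempty loopless graphs, each having an even number of edges. Then for every $\varepsilon>0$ there exists a positive integer $n_0=n_0(\varepsilon,\mathcal{H})$ such that for every $n\geq n_0$, if $\mathcal{G}\subseteq\mathbb{F}_2^{\binom{[n]}{2}}$ is an $\mathcal{H}$-code with $\mathbb{P}[\mathcal{G}]=\delta_n(\mathcal{H})$, then $$\big\|\mathbb{1}_{\mathcal{G}}-\mathbb{P}[\mathcal{G}]\big\|_{U_2}\leq\varepsilon.$$
   Context: Graphs: for a nonempty finite set $V$, $\binom{V}{\leq 2}$ denotes the set of nonempty subsets of $V$ with at most two elements and $\binom{V}{2}$ the set of $2$-element subsets. A graph on $V$ is a subset of $\binom{V}{\leq 2}$; its elements of size $2$ are edges and of size $1$ self-loops; it is loopless if it has no self-loops. The spanning vertex set $V(G)$ is the union of the members of $G$. Graphs $G,H$ are isomorphic if there is a bijection $\phi\colon V(G)\to V(H)$ with $\{x,y\}\in G\iff\{\phi(x),\phi(y)\}\in H$ for all $x,y\in V(G)$. For graphs on the same vertex set, $G_1+G_2$ denotes symmetric difference. Loopless graphs on $[n]$ are identified with elements of $\mathbb{F}_2^{\binom{[n]}{2}}$ via indicators; $\mathbb{P}$ is the uniform probability measure on $\mathbb{F}_2^{\binom{[n]}{2}}$ and $\mathbb{E}$ the corresponding expectation. An $\mathcal{H}$-code is a family $\mathcal{G}$ of graphs on a common vertex set such that for all $G_1,G_2\in\mathcal{G}$, $G_1+G_2$ is not isomorphic to any graph of $\mathcal{H}$. $\delta_n(\mathcal{H})$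 is the maximum of $\mathbb{P}[\mathcal{G}]$ over all $\mathcal{H}$-codes $\mathcal{G}\subseteq\mathbb{F}_2^{\binom{[n]}{2}}$. Gowers norm: for a nonempty finite set $\mathcal{I}$, $d\geq 2$ and $f\colon\mathbb{F}_2^{\mathcal{I}}\to\mathbb{C}$, $\|f\|_{U_d}=\Big|\mathbb{E}_{x,y_1,\dots,y_d\in\mathbb{F}_2^{\mathcal{I}}}\prod_{s\subseteq[d]}\mathcal{C}^{|s|}f\big(x+\sum_{i\in s}y_i\big)\Big|^{1/2^d}$, where $\mathcal{C}$ is complex conjugation. *)

theory Defs
  imports "HOL-Analysis.Analysis"
begin

text \<open>The 2-element subsets of [n] = {1..n}; loopless graphs on [n] are subsets of this set,
  i.e. elements of F_2^(binom [n] 2) via indicators.\<close>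
definition pairs_n :: "nat \<Rightarrow> nat set set" where
  "pairs_n n = {e. e \<subseteq> {1..n} \<and> card e = 2}"

definition spanV :: "'a set set \<Rightarrow> 'a set" where
  "spanV G = \<Union> G"

definition graph_iso :: "'a set set \<Rightarrow> 'b set set \<Rightarrow> bool" where
  "graph_iso G H \<longleftrightarrow> (\<exists>\<phi>. bij_betw \<phi> (spanV G) (spanV H) \<and>
      (\<forall>x\<in>spanV G. \<forall>y\<in>spanV G. {x, y} \<in> G \<longleftrightarrow> {\<phi> x, \<phi> y} \<in> H))"

definition nonempty_loopless_even :: "'a set set \<Rightarrow> bool" where
  "nonempty_loopless_even K \<longleftrightarrow> finite (spanV K) \<and> K \<noteq> {} \<and>
      (\<forall>e\<in>K. card e = 2) \<and> even (card K)"

text \<open>An H-code in F_2^(binom [n] 2): symmetric difference is graph addition.\<close>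
definition H_code :: "'a set set set \<Rightarrow> nat \<Rightarrow> nat set set set \<Rightarrow> bool" where
  "H_code \<H> n \<G> \<longleftrightarrow> \<G> \<subseteq> Pow (pairs_n n) \<and>
     (\<forall>G1\<in>\<G>. \<forall>G2\<in>\<G>. \<not> (\<exists>K\<in>\<H>. graph_iso (G1 - G2 \<union> (G2 - G1)) K))"

definition Pn :: "nat \<Rightarrow> nat set set set \<Rightarrow> real" where
  "Pn n \<G> = real (card (\<G> \<inter> Pow (pairs_n n))) / 2 ^ card (pairs_n n)"

definition delta_n :: "nat \<Rightarrow> 'a set set set \<Rightarrow> real" where
  "delta_n n \<H> = Max {Pn n \<G> | \<G>. H_code \<H> n \<G>}"

text \<open>Elements of F_2^I are subsets of I; addition is symmetric difference.
  The sum of ys i over i in s:\<close>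
definition xor_sum :: "nat set \<Rightarrow> (nat \<Rightarrow> 'i set) \<Rightarrow> 'i set" where
  "xor_sum s ys = {v. odd (card {i\<in>s. v \<in> ys i})}"

definition symdiff :: "'i set \<Rightarrow> 'i set \<Rightarrow> 'i set" where
  "symdiff A B = (A - B) \<union> (B - A)"

definition gowers_norm :: "'i set \<Rightarrow> nat \<Rightarrow> ('i set \<Rightarrow> complex) \<Rightarrow> real" where
  "gowers_norm I d f =
     cmod ((\<Sum>x\<in>Pow I. \<Sum>ys\<in>PiE {1..d} (\<lambda>_. Pow I).
        \<Prod>s\<in>Pow {1..d}. (let z = symdiff x (xor_sum s ys) in
                           if even (card s) then f z else cnj (f z)))
       / of_nat (card (Pow I) ^ (d + 1))) powr (1 / 2 ^ d)"

end

theory Submission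
  imports Defs "HOL-Library.Ramsey"
begin

text \<open>Expand \<open>g = 1_G - P[G]\<close> in the Walsh characters \<open>(-1)^|R \<inter> x|\<close> of \<open>F_2^(binom [n] 2)\<close>.
  The fourth power of the \<open>U_2\<close> norm of \<open>g\<close> is the normalised sum of the fourth powers of
  its Fourier coefficients, so by Parseval it suffices to bound every coefficient by \<open>\<epsilon>\<^sup>2\<close>;
  the coefficient at \<open>R = {}\<close> vanishes because \<open>g\<close> has mean zero.

  For \<open>R \<noteq> {}\<close> regard \<open>R\<close> as a graph on \<open>[n]\<close>. By Ramsey's theorem it has a clique or an
  independent set \<open>S\<close> with \<open>m\<close> vertices once \<open>n\<close> is large. If \<open>S\<close> is independent, the
  coefficient only sees edges outside \<open>S\<close>; the fibres of \<open>G\<close> over those edges are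
  \<open>H\<close>-codes on \<open>m\<close> vertices, of density at most \<open>\<delta>_m\<close>, and this bounds the coefficient by
  \<open>\<delta>_m - \<delta>_n\<close>. If \<open>S\<close> is a clique, choose an edge \<open>t\<close> of \<open>R\<close>. Since the graphs of \<open>H\<close>
  have an even number of edges, adding to a parity class of \<open>G\<close> its translate by \<open>t\<close>
  yields an \<open>H\<close>-code, so by optimality each parity class is half of \<open>G\<close>, and the two
  doubled classes are optimal codes whose coefficients at the complement of \<open>R\<close>, which
  avoids the edges inside \<open>S\<close>, control the coefficient of \<open>G\<close> at \<open>R\<close>. Finally choose \<open>m\<close>
  with \<open>\<delta>_m\<close> within \<open>\<epsilon>\<^sup>2\<close> of \<open>inf \<delta>_n\<close>.\<close>

section \<open>Walsh characters of \<open>F_2^E\<close>\<close>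

lemma symdiff_cancel_right [simp]: "symdiff (symdiff x y) y = x"
  and symdiff_empty_right [simp]: "symdiff x {} = x"
  by (auto simp: symdiff_def)

lemma finite_symdiff [simp]: "finite x \<Longrightarrow> finite y \<Longrightarrow> finite (symdiff x y)"
  by (simp add: symdiff_def)

lemma symdiff_subset: "x \<subseteq> E \<Longrightarrow> y \<subseteq> E \<Longrightarrow> symdiff x y \<subseteq> E"
  by (auto simp: symdiff_def)

lemma image_symdiff:
  assumes "inj_on f C" "a \<subseteq> C" "b \<subseteq> C"
  shows "f ` symdiff a b = symdiff (f ` a) (f ` b)"
proof -
  have "f ` (a - b) = f ` a - f ` b" "f ` (b - a) = f ` b - f ` a"
    using assms by (auto intro!: inj_on_image_set_diff[OF assms(1)])
  then show ?thesis
    by (simp add: symdiff_def image_Un)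
qed

lemma card_symdiff:
  assumes "finite A" "finite B"
  shows "card (symdiff A B) + 2 * card (A \<inter> B) = card A + card B"
proof -
  have "card (symdiff A B) = card ((A \<union> B) - (A \<inter> B))"
    by (rule arg_cong[where f = card]) (auto simp: symdiff_def)
  also have "\<dots> = card (A \<union> B) - card (A \<inter> B)"
    by (rule card_Diff_subset) (use assms in auto)
  finally have "card (symdiff A B) = card (A \<union> B) - card (A \<inter> B)" .
  moreover have "card (A \<inter> B) \<le> card (A \<union> B)"
    using assms by (intro card_mono) auto
  ultimately show ?thesis
    using card_Un_Int[OF assms] by linarith
qed

lemma even_card_symdiff:
  assumes "finite A" "finite B"
  shows "even (card (symdiff A B)) \<longleftrightarrow> (even (card A) \<longleftrightarrow> even (card B))"
proof -
  have "even (card (symdiff A B) + 2 * card (A \<inter> B)) \<longleftrightarrow> even (card A + card B)"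
    by (simp only: card_symdiff[OF assms])
  then show ?thesis
    by simp
qed

lemma even_card_symdiff_singleton: "finite y \<Longrightarrow> even (card (symdiff y {t})) \<longleftrightarrow> odd (card y)"
  using even_card_symdiff[of y "{t}"] by simp

lemma sum_Pow_symdiff_reindex:
  assumes "a \<subseteq> E"
  shows "(\<Sum>x\<in>Pow E. h (symdiff a x)) = (\<Sum>x\<in>Pow E. h x)"
  by (rule sum.reindex_bij_witness[of _ "symdiff a" "symdiff a"])
    (use assms in \<open>auto simp: symdiff_def\<close>)

definition walsh :: "'e set \<Rightarrow> 'e set \<Rightarrow> real" where
  "walsh R x = (-1) ^ card (R \<inter> x)"

lemma walsh_commute: "walsh R x = walsh x R"
  by (simp add: walsh_def Int_commute)

lemma walsh_empty [simp]: "walsh {} x = 1" "walsh R {} = 1"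
  by (simp_all add: walsh_def)

lemma walsh_singleton: "e \<in> R \<Longrightarrow> walsh R {e} = -1"
  by (simp add: walsh_def)

lemma abs_walsh [simp]: "\<bar>walsh R x\<bar> = 1"
  by (simp add: walsh_def)

lemma walsh_eq_prod: "finite R \<Longrightarrow> walsh R x = (\<Prod>e\<in>R. if e \<in> x then -1 else 1)"
  by (simp add: walsh_def prod.If_cases Int_def)

lemma walsh_symdiff: "finite R \<Longrightarrow> walsh R (symdiff x y) = walsh R x * walsh R y"
  by (simp add: walsh_eq_prod prod.distrib[symmetric] symdiff_def, rule prod.cong, auto)

lemma walsh_eq_sign_mult_walsh_Diff:
  assumes "finite P" "R \<subseteq> P" "y \<subseteq> P"
  shows "walsh R y = (-1) ^ card y * walsh (P - R) y"
proof -
  have "(R \<inter> y) \<union> ((P - R) \<inter> y) = y" "(R \<inter> y) \<inter> ((P - R) \<inter> y) = {}"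
    using assms by blast+
  moreover have "finite (R \<inter> y)" "finite ((P - R) \<inter> y)"
    using assms by (auto intro: finite_subset)
  ultimately have "card y = card (R \<inter> y) + card ((P - R) \<inter> y)"
    using card_Un_disjoint by metis
  then show ?thesis
    by (simp add: walsh_def power_add ac_simps)
qed

lemma sum_walsh:
  assumes "finite E" "R \<subseteq> E"
  shows "(\<Sum>x\<in>Pow E. walsh R x) = (if R = {} then 2 ^ card E else 0)"
proof (cases "R = {}")
  case True
  then show ?thesis
    using assms by (simp add: card_Pow)
next
  case False
  then obtain e where e: "e \<in> R"
    by blast
  have "(\<Sum>x\<in>Pow E. walsh R x) = (\<Sum>x\<in>Pow E. walsh R (symdiff {e} x))"
    using assms e by (simp add: sum_Pow_symdiff_reindex subset_eq)
  also have "\<dots> = - (\<Sum>x\<in>Pow E. walsh R x)"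
    using assms e by (simp add: walsh_symdiff walsh_singleton sum_negf finite_subset)
  finally show ?thesis
    using False by simp
qed

text \<open>Unnormalised: this is \<open>2^|E|\<close> times the usual Fourier coefficient \<open>E_x f x (-1)^|R \<inter> x|\<close>.\<close>
definition walsh_coeff :: "'e set \<Rightarrow> ('e set \<Rightarrow> real) \<Rightarrow> 'e set \<Rightarrow> real" where
  "walsh_coeff E f R = (\<Sum>x\<in>Pow E. f x * walsh R x)"

lemma walsh_inversion:
  assumes "finite E" "x \<subseteq> E"
  shows "(\<Sum>R\<in>Pow E. walsh_coeff E f R * walsh R x) = 2 ^ card E * f x"
proof -
  have char: "walsh R y * walsh R x = walsh (symdiff y x) R" if "R \<subseteq> E" for R y
    using that assms(1) by (metis walsh_symdiff walsh_commute finite_subset)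
  have "(\<Sum>R\<in>Pow E. walsh_coeff E f R * walsh R x)
      = (\<Sum>y\<in>Pow E. f y * (\<Sum>R\<in>Pow E. walsh (symdiff y x) R))"
    unfolding walsh_coeff_def sum_distrib_left sum_distrib_right
    by (subst sum.swap) (simp add: char mult.assoc)
  also have "\<dots> = (\<Sum>y\<in>Pow E. if y = x then 2 ^ card E * f y else 0)"
  proof (intro sum.cong refl)
    fix y assume "y \<in> Pow E"
    then have "symdiff y x \<subseteq> E" and "symdiff y x = {} \<longleftrightarrow> y = x"
      using assms by (auto simp: symdiff_def)
    then show "f y * (\<Sum>R\<in>Pow E. walsh (symdiff y x) R) = (if y = x then 2 ^ card E * f y else 0)"
      using assms by (simp add: sum_walsh)
  qed
  also have "\<dots> = 2 ^ card E * f x"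
    using assms by simp
  finally show ?thesis .
qed

lemma walsh_parseval:
  assumes "finite E"
  shows "(\<Sum>R\<in>Pow E. (walsh_coeff E f R)\<^sup>2) = 2 ^ card E * (\<Sum>x\<in>Pow E. (f x)\<^sup>2)"
proof -
  have "(\<Sum>R\<in>Pow E. (walsh_coeff E f R)\<^sup>2) = (\<Sum>x\<in>Pow E. f x * (\<Sum>R\<in>Pow E. walsh_coeff E f R * walsh R x))"
    unfolding power2_eq_square walsh_coeff_def[of E f] sum_distrib_left sum_distrib_right
    by (subst sum.swap) (simp add: ac_simps)
  also have "\<dots> = (\<Sum>x\<in>Pow E. f x * (2 ^ card E * f x))"
    using assms by (intro sum.cong refl) (simp add: walsh_inversion)
  finally show ?thesis
    by (simp add: sum_distrib_left power2_eq_square ac_simps)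
qed

lemma sum_walsh_coeff_power4:
  assumes "finite E"
  shows "(\<Sum>R\<in>Pow E. walsh_coeff E f R ^ 4)
     = 2 ^ card E * (\<Sum>x\<in>Pow E. \<Sum>a\<in>Pow E. \<Sum>b\<in>Pow E. f x * f a * f b * f (symdiff x (symdiff a b)))"
proof -
  let ?z = "\<lambda>x a b. symdiff x (symdiff a b)"
  have char: "walsh R x * walsh R a * walsh R b = walsh R (?z x a b)" if "R \<in> Pow E" for R x a b
    using that assms by (simp add: walsh_symdiff finite_subset)
  have "(\<Sum>R\<in>Pow E. walsh_coeff E f R ^ 4)
      = (\<Sum>R\<in>Pow E. \<Sum>x\<in>Pow E. \<Sum>a\<in>Pow E. \<Sum>b\<in>Pow E.
           f x * f a * f b * (walsh_coeff E f R * walsh R (?z x a b)))"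
    unfolding power4_eq_xxxx walsh_coeff_def[of E f] sum_distrib_left sum_distrib_right
    by (intro sum.cong refl) (simp add: char[symmetric] ac_simps)
  also have "\<dots> = (\<Sum>x\<in>Pow E. \<Sum>a\<in>Pow E. \<Sum>b\<in>Pow E. \<Sum>R\<in>Pow E.
           f x * f a * f b * (walsh_coeff E f R * walsh R (?z x a b)))"
    by (subst sum.swap, rule sum.cong[OF refl], subst sum.swap, rule sum.cong[OF refl], rule sum.swap)
  also have "\<dots> = (\<Sum>x\<in>Pow E. \<Sum>a\<in>Pow E. \<Sum>b\<in>Pow E. f x * f a * f b * (2 ^ card E * f (?z x a b)))"
    using assms by (intro sum.cong refl) (simp add: sum_distrib_left[symmetric] walsh_inversion symdiff_subset)
  finally show ?thesis
    by (simp add: sum_distrib_left ac_simps)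
qed

lemma abs_sum_walsh_mult_le:
  fixes c :: "'e set \<Rightarrow> real"
  assumes Z: "finite Z" "R \<subseteq> Z" "R \<noteq> {}" and c: "\<And>z. z \<subseteq> Z \<Longrightarrow> c z \<le> M"
  shows "\<bar>\<Sum>z\<in>Pow Z. walsh R z * c z\<bar> \<le> M * 2 ^ card Z - (\<Sum>z\<in>Pow Z. c z)"
proof -
  have walsh0: "(\<Sum>z\<in>Pow Z. walsh R z) = 0"
    using sum_walsh[OF Z(1,2)] Z(3) by simp
  have "s * (\<Sum>z\<in>Pow Z. walsh R z * c z) \<le> M * 2 ^ card Z - (\<Sum>z\<in>Pow Z. c z)"
    if s: "\<bar>s\<bar> = 1" for s :: real
  proof -
    have "0 \<le> (\<Sum>z\<in>Pow Z. (1 + s * walsh R z) * (M - c z))"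
    proof (intro sum_nonneg mult_nonneg_nonneg)
      fix z assume "z \<in> Pow Z"
      then show "0 \<le> M - c z"
        using c by simp
      show "0 \<le> 1 + s * walsh R z"
        using abs_ge_minus_self[of "s * walsh R z"] s by (simp add: abs_mult)
    qed
    also have "\<dots> = (\<Sum>z\<in>Pow Z. M - c z) + s * M * (\<Sum>z\<in>Pow Z. walsh R z)
        - s * (\<Sum>z\<in>Pow Z. walsh R z * c z)"
      by (simp add: sum_distrib_left algebra_simps sum.distrib sum_subtractf)
    also have "\<dots> = M * 2 ^ card Z - (\<Sum>z\<in>Pow Z. c z) - s * (\<Sum>z\<in>Pow Z. walsh R z * c z)"
      using Z(1) by (simp add: walsh0 sum_subtractf card_Pow)
    finally show ?thesis
      by simp
  qed
  from this[of 1] this[of "-1"] show ?thesis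
    by (simp add: abs_le_iff)
qed

section \<open>The \<open>U_2\<close> norm\<close>

lemma xor_sum_1_2:
  "xor_sum {} ys = {}" "xor_sum {1} ys = ys 1" "xor_sum {2} ys = ys 2"
  "xor_sum {1, 2} ys = symdiff (ys 1) (ys 2)"
proof -
  have "{i \<in> {1, 2::nat}. v \<in> ys i} = (if v \<in> ys 1 then {1} else {}) \<union> (if v \<in> ys 2 then {2} else {})"
    for v
    by auto
  then show "xor_sum {1, 2} ys = symdiff (ys 1) (ys 2)"
    by (auto simp: xor_sum_def symdiff_def)
qed (auto simp: xor_sum_def Collect_conv_if)

lemma atLeastAtMost_1_2: "{1..2::nat} = {1, 2}"
  by auto

lemma sum_PiE_1_2:
  "(\<Sum>ys\<in>PiE {1..2::nat} (\<lambda>_. A). h (ys 1) (ys 2)) = (\<Sum>a\<in>A. \<Sum>b\<in>A. h a b)"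
proof -
  have "(\<Sum>ys\<in>PiE {1, 2::nat} (\<lambda>_. A). h (ys 1) (ys 2)) = (\<Sum>(a, b)\<in>A \<times> A. h a b)"
    by (rule sum.reindex_bij_witness[of _ "\<lambda>(a, b). \<lambda>k\<in>{1, 2::nat}. if k = 1 then a else b"
          "\<lambda>ys. (ys 1, ys 2)"])
      (auto simp: PiE_def extensional_def fun_eq_iff)
  then show ?thesis
    unfolding atLeastAtMost_1_2 by (simp add: sum.cartesian_product case_prod_beta)
qed

lemma gowers_norm_2_eq:
  "gowers_norm I 2 f = cmod ((\<Sum>x\<in>Pow I. \<Sum>a\<in>Pow I. \<Sum>b\<in>Pow I.
       f x * cnj (f (symdiff x a)) * cnj (f (symdiff x b)) * f (symdiff x (symdiff a b)))
     / of_nat (card (Pow I) ^ 3)) powr (1 / 4)"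
proof -
  have prod: "(\<Prod>s\<in>Pow {1..2}. let z = symdiff x (xor_sum s ys) in if even (card s) then f z else cnj (f z))
      = f x * cnj (f (symdiff x (ys 1))) * cnj (f (symdiff x (ys 2))) * f (symdiff x (symdiff (ys 1) (ys 2)))"
    for x and ys :: "nat \<Rightarrow> _"
    unfolding atLeastAtMost_1_2 by (simp add: Pow_insert insert_commute xor_sum_1_2 Let_def ac_simps del: One_nat_def)
  have sum: "(\<Sum>ys\<in>PiE {1..2::nat} (\<lambda>_. Pow I).
        f x * cnj (f (symdiff x (ys 1))) * cnj (f (symdiff x (ys 2))) * f (symdiff x (symdiff (ys 1) (ys 2))))
      = (\<Sum>a\<in>Pow I. \<Sum>b\<in>Pow I.
        f x * cnj (f (symdiff x a)) * cnj (f (symdiff x b)) * f (symdiff x (symdiff a b)))" for x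
    by (rule sum_PiE_1_2)
  show ?thesis
    unfolding gowers_norm_def prod sum by simp
qed

lemma sum_Pow_symdiff_reindex_2:
  assumes "x \<subseteq> I"
  shows "(\<Sum>a\<in>Pow I. \<Sum>b\<in>Pow I. h a b) = (\<Sum>a\<in>Pow I. \<Sum>b\<in>Pow I. h (symdiff x a) (symdiff x b))"
proof -
  have "(\<Sum>a\<in>Pow I. \<Sum>b\<in>Pow I. h a b) = (\<Sum>a\<in>Pow I. \<Sum>b\<in>Pow I. h (symdiff x a) b)"
    using sum_Pow_symdiff_reindex[OF assms, of "\<lambda>a. \<Sum>b\<in>Pow I. h a b"] by simp
  also have "\<dots> = (\<Sum>a\<in>Pow I. \<Sum>b\<in>Pow I. h (symdiff x a) (symdiff x b))"
    by (rule sum.cong[OF refl]) (rule sum_Pow_symdiff_reindex[OF assms, symmetric])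
  finally show ?thesis .
qed

lemma gowers_norm_2_of_real:
  fixes g :: "'i set \<Rightarrow> real"
  assumes "finite I"
  shows "gowers_norm I 2 (\<lambda>x. of_real (g x)) = ((\<Sum>R\<in>Pow I. walsh_coeff I g R ^ 4) / (2 ^ card I) ^ 4) powr (1 / 4)"
proof -
  let ?S = "\<Sum>x\<in>Pow I. \<Sum>a\<in>Pow I. \<Sum>b\<in>Pow I.
      g x * g (symdiff x a) * g (symdiff x b) * g (symdiff x (symdiff a b))"
  have "?S = (\<Sum>x\<in>Pow I. \<Sum>a\<in>Pow I. \<Sum>b\<in>Pow I. g x * g a * g b * g (symdiff x (symdiff a b)))"
  proof (rule sum.cong[OF refl])
    fix x assume "x \<in> Pow I"
    moreover have "symdiff x (symdiff (symdiff x a) (symdiff x b)) = symdiff x (symdiff a b)" for a b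
      by (auto simp: symdiff_def)
    ultimately show "(\<Sum>a\<in>Pow I. \<Sum>b\<in>Pow I. g x * g (symdiff x a) * g (symdiff x b) * g (symdiff x (symdiff a b)))
        = (\<Sum>a\<in>Pow I. \<Sum>b\<in>Pow I. g x * g a * g b * g (symdiff x (symdiff a b)))"
      using sum_Pow_symdiff_reindex_2[of x I "\<lambda>a b. g x * g a * g b * g (symdiff x (symdiff a b))"] by simp
  qed
  also have "\<dots> = (\<Sum>R\<in>Pow I. walsh_coeff I g R ^ 4) / 2 ^ card I"
    using assms by (simp add: sum_walsh_coeff_power4)
  finally have S: "?S = (\<Sum>R\<in>Pow I. walsh_coeff I g R ^ 4) / 2 ^ card I" .
  have "gowers_norm I 2 (\<lambda>x. of_real (g x)) = (\<bar>?S\<bar> / (2 ^ card I) ^ 3) powr (1 / 4)"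
    using assms by (simp add: gowers_norm_2_eq card_Pow norm_divide norm_power flip: of_real_mult of_real_sum)
  also have "\<dots> = ((\<Sum>R\<in>Pow I. walsh_coeff I g R ^ 4) / (2 ^ card I) ^ 4) powr (1 / 4)"
    unfolding S by (simp add: abs_of_nonneg sum_nonneg flip: power_Suc)
  finally show ?thesis .
qed

lemma sum_walsh_coeff_power4_le:
  fixes g :: "'i set \<Rightarrow> real"
  assumes "finite I" and g: "\<And>x. \<bar>g x\<bar> \<le> 1" and coeff: "\<And>R. R \<subseteq> I \<Longrightarrow> \<bar>walsh_coeff I g R\<bar> \<le> C"
  shows "(\<Sum>R\<in>Pow I. walsh_coeff I g R ^ 4) \<le> C\<^sup>2 * (2 ^ card I)\<^sup>2"
proof -
  let ?N = "(2::real) ^ card I"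
  have "(\<Sum>R\<in>Pow I. walsh_coeff I g R ^ 4) \<le> (\<Sum>R\<in>Pow I. C\<^sup>2 * (walsh_coeff I g R)\<^sup>2)"
  proof (rule sum_mono)
    fix R assume "R \<in> Pow I"
    then have "(walsh_coeff I g R)\<^sup>2 \<le> C\<^sup>2"
      using coeff abs_le_square_iff order_trans[OF abs_ge_zero] by (metis PowD abs_of_nonneg)
    then have "(walsh_coeff I g R)\<^sup>2 * (walsh_coeff I g R)\<^sup>2 \<le> C\<^sup>2 * (walsh_coeff I g R)\<^sup>2"
      by (rule mult_right_mono) simp
    then show "walsh_coeff I g R ^ 4 \<le> C\<^sup>2 * (walsh_coeff I g R)\<^sup>2"
      by (simp flip: power_add)
  qed
  also have "\<dots> = C\<^sup>2 * (?N * (\<Sum>x\<in>Pow I. (g x)\<^sup>2))"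
    using assms by (simp add: walsh_parseval flip: sum_distrib_left)
  also have "\<dots> \<le> C\<^sup>2 * (?N * ?N)"
  proof -
    have "(\<Sum>x\<in>Pow I. (g x)\<^sup>2) \<le> (\<Sum>x\<in>Pow I. 1)"
      using g by (intro sum_mono) (simp add: abs_square_le_1)
    then show ?thesis
      using assms by (intro mult_left_mono) (simp_all add: card_Pow)
  qed
  finally show ?thesis
    by (simp add: power2_eq_square)
qed

lemma gowers_norm_2_le_sqrt:
  fixes g :: "'i set \<Rightarrow> real"
  assumes "finite I" and g: "\<And>x. \<bar>g x\<bar> \<le> 1"
    and coeff: "\<And>R. R \<subseteq> I \<Longrightarrow> \<bar>walsh_coeff I g R\<bar> \<le> c * 2 ^ card I"
  shows "gowers_norm I 2 (\<lambda>x. of_real (g x)) \<le> sqrt c"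
proof -
  let ?N = "(2::real) ^ card I"
  have "0 \<le> c * ?N"
    using coeff[of "{}"] abs_ge_zero order_trans by blast
  moreover have "0 < ?N"
    by simp
  ultimately have c: "0 \<le> c"
    by (auto simp: zero_le_mult_iff)
  have "(\<Sum>R\<in>Pow I. walsh_coeff I g R ^ 4) \<le> (c * ?N)\<^sup>2 * ?N\<^sup>2"
    using assms by (rule sum_walsh_coeff_power4_le)
  then have "(\<Sum>R\<in>Pow I. walsh_coeff I g R ^ 4) / ?N ^ 4 \<le> c powr 2"
    using c by (simp add: divide_le_eq powr_realpow' power2_eq_square power4_eq_xxxx ac_simps)
  then have "gowers_norm I 2 (\<lambda>x. of_real (g x)) \<le> (c powr 2) powr (1 / 4)"
    using assms by (simp add: gowers_norm_2_of_real powr_mono2 sum_nonneg zero_le_even_power)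
  also have "\<dots> = sqrt c"
    using c by (simp only: powr_powr) (simp add: powr_half_sqrt)
  finally show ?thesis .
qed

section \<open>Isomorphic graphs\<close>

lemma card_eq_if_graph_iso:
  assumes iso: "graph_iso X K" and X2: "\<forall>e\<in>X. card e = 2" and K2: "\<forall>e\<in>K. card e = 2"
  shows "card X = card K"
proof -
  obtain \<phi> where bij: "bij_betw \<phi> (spanV X) (spanV K)"
    and edges: "\<forall>x\<in>spanV X. \<forall>y\<in>spanV X. {x, y} \<in> X \<longleftrightarrow> {\<phi> x, \<phi> y} \<in> K"
    using iso by (auto simp: graph_iso_def)
  have "inj_on \<phi> (spanV X)"
    using bij by (simp add: bij_betw_def)
  then have "inj_on (image \<phi>) X"
    by (rule inj_on_subset[OF inj_on_image_Pow]) (auto simp: spanV_def)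
  moreover have "image \<phi> ` X = K"
  proof
    show "image \<phi> ` X \<subseteq> K"
    proof
      fix k assume "k \<in> image \<phi> ` X"
      then obtain e where e: "e \<in> X" "k = \<phi> ` e"
        by auto
      then obtain x y where xy: "e = {x, y}"
        using X2 card_2_iff by metis
      then have "x \<in> spanV X" "y \<in> spanV X"
        using e by (auto simp: spanV_def)
      then show "k \<in> K"
        using edges e xy by auto
    qed
    show "K \<subseteq> image \<phi> ` X"
    proof
      fix k assume k: "k \<in> K"
      then obtain a b where ab: "k = {a, b}"
        using K2 card_2_iff by metis
      then have "a \<in> spanV K" "b \<in> spanV K"
        using k by (auto simp: spanV_def)
      then obtain x y where xy: "x \<in> spanV X" "y \<in> spanV X" "a = \<phi> x" "b = \<phi> y"
        using bij by (metis bij_betw_imp_surj_on imageE)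
      then have "{x, y} \<in> X"
        using edges k ab by auto
      moreover have "\<phi> ` {x, y} = k"
        using xy ab by auto
      ultimately show "k \<in> image \<phi> ` X"
        by blast
    qed
  qed
  ultimately show ?thesis
    by (metis card_image)
qed

lemma not_graph_iso_if_odd_card:
  assumes "nonempty_loopless_even K" "\<forall>e\<in>X. card e = 2" "odd (card X)"
  shows "\<not> graph_iso X K"
  using assms card_eq_if_graph_iso unfolding nonempty_loopless_even_def by metis

lemma graph_iso_if_graph_iso_image:
  assumes inj: "inj_on \<sigma> S" and XS: "X \<subseteq> Pow S" and iso: "graph_iso (image \<sigma> ` X) K"
  shows "graph_iso X K"
proof -
  let ?Y = "image \<sigma> ` X"
  obtain \<psi> where bij: "bij_betw \<psi> (spanV ?Y) (spanV K)"
    and edges: "\<forall>x\<in>spanV ?Y. \<forall>y\<in>spanV ?Y. {x, y} \<in> ?Y \<longleftrightarrow> {\<psi> x, \<psi> y} \<in> K"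
    using iso by (auto simp: graph_iso_def)
  have span: "spanV ?Y = \<sigma> ` spanV X" and sub: "spanV X \<subseteq> S"
    using XS by (auto simp: spanV_def)
  have "bij_betw \<sigma> (spanV X) (spanV ?Y)"
    unfolding span by (rule bij_betw_imageI[OF inj_on_subset[OF inj sub]]) simp
  then have "bij_betw (\<psi> \<circ> \<sigma>) (spanV X) (spanV K)"
    using bij by (rule bij_betw_trans)
  moreover have "{x, y} \<in> X \<longleftrightarrow> {\<psi> (\<sigma> x), \<psi> (\<sigma> y)} \<in> K" if "x \<in> spanV X" "y \<in> spanV X" for x y
  proof -
    have "{x, y} \<in> X \<longleftrightarrow> \<sigma> ` {x, y} \<in> ?Y"
    proof
      assume "\<sigma> ` {x, y} \<in> ?Y"
      then obtain e where e: "e \<in> X" "\<sigma> ` {x, y} = \<sigma> ` e"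
        by auto
      moreover have "{x, y} \<subseteq> S" "e \<subseteq> S"
        using that sub e XS by auto
      ultimately show "{x, y} \<in> X"
        using inj_on_image_eq_iff[OF inj] by metis
    qed (use imageI[of "{x, y}" X "image \<sigma>"] in simp)
    also have "\<dots> \<longleftrightarrow> {\<psi> (\<sigma> x), \<psi> (\<sigma> y)} \<in> K"
      using that edges span by simp
    finally show ?thesis .
  qed
  ultimately show ?thesis
    by (auto simp: graph_iso_def)
qed

section \<open>Densities of \<open>H\<close>-codes\<close>

definition H_code_family :: "'a set set set \<Rightarrow> 'v set set set \<Rightarrow> bool" where
  "H_code_family \<H> \<G> \<longleftrightarrow> (\<forall>G1\<in>\<G>. \<forall>G2\<in>\<G>. \<forall>K\<in>\<H>. \<not> graph_iso (symdiff G1 G2) K)"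

lemma H_code_iff: "H_code \<H> n \<G> \<longleftrightarrow> \<G> \<subseteq> Pow (pairs_n n) \<and> H_code_family \<H> \<G>"
  by (auto simp: H_code_def H_code_family_def symdiff_def)

lemma H_code_subset: "H_code \<H> n \<G> \<Longrightarrow> \<F> \<subseteq> \<G> \<Longrightarrow> H_code \<H> n \<F>"
  unfolding H_code_iff H_code_family_def by blast

lemma pairs_n_eq_nsets: "pairs_n n = nsets {1..n} 2"
  by (auto simp: pairs_n_def nsets_def intro: card_ge_0_finite)

lemma finite_pairs_n [simp]: "finite (pairs_n n)"
  by (simp add: pairs_n_eq_nsets finite_imp_finite_nsets)

lemma finite_if_H_code: "H_code \<H> n \<G> \<Longrightarrow> finite \<G>"
  by (auto simp: H_code_iff intro: finite_subset)

lemma Pn_eq: "\<G> \<subseteq> Pow (pairs_n n) \<Longrightarrow> Pn n \<G> = card \<G> / 2 ^ card (pairs_n n)"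
  by (simp add: Pn_def Int_absorb2)

lemma Pn_bounds: "0 \<le> Pn n \<G>" "Pn n \<G> \<le> 1"
proof -
  have "card (\<G> \<inter> Pow (pairs_n n)) \<le> card (Pow (pairs_n n))"
    by (rule card_mono) auto
  then have "real (card (\<G> \<inter> Pow (pairs_n n))) \<le> 2 ^ card (pairs_n n)"
    by (simp add: card_Pow)
  then show "0 \<le> Pn n \<G>" "Pn n \<G> \<le> 1"
    by (simp_all add: Pn_def)
qed

lemma Pn_le_delta_n:
  assumes "H_code \<H> n \<G>"
  shows "Pn n \<G> \<le> delta_n n \<H>"
proof -
  have "{Pn n \<G> | \<G>. H_code \<H> n \<G>} \<subseteq> Pn n ` Pow (Pow (pairs_n n))"
    by (auto simp: H_code_def)
  then have "finite {Pn n \<G> | \<G>. H_code \<H> n \<G>}"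
    by (rule finite_subset) simp
  then show ?thesis
    unfolding delta_n_def using assms by (intro Max_ge) auto
qed

lemma delta_n_nonneg: "0 \<le> delta_n n \<H>"
  using Pn_le_delta_n[of \<H> n "{}"] by (simp add: H_code_def Pn_def)

lemma card_le_delta_n:
  assumes "H_code \<H> n \<G>"
  shows "card \<G> \<le> delta_n n \<H> * 2 ^ card (pairs_n n)"
  using Pn_le_delta_n[OF assms] assms by (simp add: Pn_eq H_code_iff divide_le_eq)

lemma card_eq_delta_n:
  assumes "H_code \<H> n \<G>" "Pn n \<G> = delta_n n \<H>"
  shows "card \<G> = delta_n n \<H> * 2 ^ card (pairs_n n)"
  using assms by (simp add: Pn_eq H_code_iff divide_eq_eq)

lemma ex_delta_n_le_add:
  assumes "0 < e"
  shows "\<exists>m. \<forall>n. delta_n m \<H> \<le> delta_n n \<H> + e"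
proof -
  define \<delta> where "\<delta> n = delta_n n \<H>" for n
  have bdd: "bdd_below (range \<delta>)"
    unfolding \<delta>_def using delta_n_nonneg by (intro bdd_belowI2)
  have "\<exists>x\<in>range \<delta>. x < Inf (range \<delta>) + e"
    by (rule cInf_lessD) (use assms in auto)
  then obtain m where m: "\<delta> m < Inf (range \<delta>) + e"
    by blast
  have "Inf (range \<delta>) \<le> \<delta> n" for n
    by (rule cINF_lower[OF bdd]) simp
  then have "\<delta> m \<le> \<delta> n + e" for n
    using m by (smt (verit))
  then show ?thesis
    unfolding \<delta>_def by blast
qed

lemma card_le_delta_n_if_subset_nsets:
  assumes code: "H_code_family \<H> \<F>" and F: "\<F> \<subseteq> Pow (nsets S 2)" and "finite S"
  shows "card \<F> \<le> delta_n (card S) \<H> * 2 ^ card (nsets S 2)"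
proof -
  obtain \<sigma> where \<sigma>: "bij_betw \<sigma> S {1..card S}"
    using finite_same_card_bij[OF \<open>finite S\<close>, of "{1..card S}"] by auto
  let ?\<psi> = "image \<sigma>"
  have \<psi>: "bij_betw ?\<psi> (nsets S 2) (pairs_n (card S))"
    unfolding pairs_n_eq_nsets by (rule bij_betw_nsets[OF \<sigma>])
  then have inj\<psi>: "inj_on ?\<psi> (nsets S 2)"
    by (rule bij_betw_imp_inj_on)
  have inj: "inj_on (image ?\<psi>) \<F>"
    using F inj_on_subset[OF inj_on_image_Pow[OF inj\<psi>]] by blast
  have "H_code \<H> (card S) (image ?\<psi> ` \<F>)"
    unfolding H_code_iff
  proof
    show "image ?\<psi> ` \<F> \<subseteq> Pow (pairs_n (card S))"
      using F \<psi> by (auto simp: bij_betw_def)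
    show "H_code_family \<H> (image ?\<psi> ` \<F>)"
    proof (unfold H_code_family_def, clarify)
      fix y1 y2 K assume y: "y1 \<in> \<F>" "y2 \<in> \<F>" and K: "K \<in> \<H>"
        and iso: "graph_iso (symdiff (?\<psi> ` y1) (?\<psi> ` y2)) K"
      have sub: "symdiff y1 y2 \<subseteq> nsets S 2"
        using y F by (auto simp: symdiff_def)
      have "symdiff (?\<psi> ` y1) (?\<psi> ` y2) = ?\<psi> ` symdiff y1 y2"
        using y F by (intro image_symdiff[OF inj\<psi>, symmetric]) auto
      then have "graph_iso (symdiff y1 y2) K"
        using iso sub bij_betw_imp_inj_on[OF \<sigma>]
        by (intro graph_iso_if_graph_iso_image[of \<sigma> S]) (auto simp: nsets_def)
      then show False
        using code y K by (auto simp: H_code_family_def)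
    qed
  qed
  then have "card (image ?\<psi> ` \<F>) \<le> delta_n (card S) \<H> * 2 ^ card (pairs_n (card S))"
    by (rule card_le_delta_n)
  then show ?thesis
    using card_image[OF inj] bij_betw_same_card[OF \<psi>] by simp
qed

lemma card_fiber_le_delta_n:
  assumes code: "H_code \<H> n \<G>" and S: "S \<subseteq> {1..n}"
  shows "card {y\<in>\<G>. y \<inter> (pairs_n n - nsets S 2) = z} \<le> delta_n (card S) \<H> * 2 ^ card (nsets S 2)"
proof -
  define A where "A = nsets S 2"
  define \<F> where "\<F> = {y\<in>\<G>. y \<inter> (pairs_n n - A) = z}"
  have G: "\<G> \<subseteq> Pow (pairs_n n)" "H_code_family \<H> \<G>"
    using code by (auto simp: H_code_iff)
  have outside: "y1 - A = y2 - A" if "y1 \<in> \<F>" "y2 \<in> \<F>" for y1 y2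
    using that G(1) unfolding \<F>_def by blast
  have inj: "inj_on (\<lambda>y. y \<inter> A) \<F>"
    by (rule inj_onI) (use outside in blast)
  have sd: "symdiff (y1 \<inter> A) (y2 \<inter> A) = symdiff y1 y2" if "y1 \<in> \<F>" "y2 \<in> \<F>" for y1 y2
    using outside[OF that] unfolding symdiff_def by blast
  have "H_code_family \<H> ((\<lambda>y. y \<inter> A) ` \<F>)"
  proof (unfold H_code_family_def, clarify)
    fix y1 y2 K assume y: "y1 \<in> \<F>" "y2 \<in> \<F>" and K: "K \<in> \<H>"
      and iso: "graph_iso (symdiff (y1 \<inter> A) (y2 \<inter> A)) K"
    have "y1 \<in> \<G>" "y2 \<in> \<G>"
      using y by (simp_all add: \<F>_def)
    then show False
      using G(2) K iso sd[OF y] unfolding H_code_family_def by metis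
  qed
  moreover have "(\<lambda>y. y \<inter> A) ` \<F> \<subseteq> Pow (nsets S 2)"
    by (auto simp: A_def)
  moreover have "finite S"
    using S finite_subset by blast
  ultimately have "card ((\<lambda>y. y \<inter> A) ` \<F>) \<le> delta_n (card S) \<H> * 2 ^ card (nsets S 2)"
    by (rule card_le_delta_n_if_subset_nsets)
  then show ?thesis
    using card_image[OF inj] by (simp add: \<F>_def A_def)
qed

lemma sum_walsh_eq_sum_fibres:
  assumes "finite \<G>" "finite Z" "R \<subseteq> Z"
  shows "(\<Sum>y\<in>\<G>. walsh R y) = (\<Sum>z\<in>Pow Z. walsh R z * card {y\<in>\<G>. y \<inter> Z = z})"
proof -
  have img: "(\<lambda>y. y \<inter> Z) ` \<G> \<subseteq> Pow Z"
    by auto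
  have "(\<Sum>y\<in>\<G>. walsh R y) = (\<Sum>z\<in>Pow Z. \<Sum>y\<in>{y\<in>\<G>. y \<inter> Z = z}. walsh R y)"
    by (rule sum.group[OF assms(1) _ img, symmetric]) (simp add: assms(2))
  also have "\<dots> = (\<Sum>z\<in>Pow Z. walsh R z * card {y\<in>\<G>. y \<inter> Z = z})"
  proof (rule sum.cong[OF refl])
    fix z
    have "walsh R y = walsh R z" if "y \<inter> Z = z" for y
    proof -
      have "R \<inter> y = R \<inter> z"
        using that assms(3) by blast
      then show ?thesis
        by (simp add: walsh_def)
    qed
    then show "(\<Sum>y\<in>{y\<in>\<G>. y \<inter> Z = z}. walsh R y) = walsh R z * card {y\<in>\<G>. y \<inter> Z = z}"
      by simp
  qed
  finally show ?thesis .
qed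

lemma abs_sum_walsh_H_code_le_if_indep:
  assumes code: "H_code \<H> n \<G>" and S: "S \<subseteq> {1..n}"
    and R: "R \<subseteq> pairs_n n" "R \<noteq> {}" "R \<inter> nsets S 2 = {}"
  shows "\<bar>\<Sum>y\<in>\<G>. walsh R y\<bar> \<le> delta_n (card S) \<H> * 2 ^ card (pairs_n n) - card \<G>"
proof -
  define Z where "Z = pairs_n n - nsets S 2"
  define c where "c z = real (card {y\<in>\<G>. y \<inter> Z = z})" for z
  have finZ: "finite Z" and RZ: "R \<subseteq> Z"
    using R by (auto simp: Z_def)
  have finG: "finite \<G>"
    using code by (rule finite_if_H_code)
  have sum_eq: "(\<Sum>y\<in>\<G>. walsh R y) = (\<Sum>z\<in>Pow Z. walsh R z * c z)"
    unfolding c_def by (rule sum_walsh_eq_sum_fibres[OF finG finZ RZ])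
  have sum_c: "(\<Sum>z\<in>Pow Z. c z) = card \<G>"
    using sum.group[OF finG finite_Pow_iff[THEN iffD2, OF finZ], of "\<lambda>y. y \<inter> Z" "\<lambda>_. 1::real"]
    by (auto simp: c_def)
  have "c z \<le> delta_n (card S) \<H> * 2 ^ card (nsets S 2)" for z
    unfolding c_def Z_def by (rule card_fiber_le_delta_n[OF code S])
  then have "\<bar>\<Sum>z\<in>Pow Z. walsh R z * c z\<bar>
      \<le> delta_n (card S) \<H> * 2 ^ card (nsets S 2) * 2 ^ card Z - (\<Sum>z\<in>Pow Z. c z)"
    by (rule abs_sum_walsh_mult_le[OF finZ RZ R(2)])
  then have "\<bar>\<Sum>y\<in>\<G>. walsh R y\<bar> \<le> delta_n (card S) \<H> * 2 ^ card (nsets S 2) * 2 ^ card Z - card \<G>"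
    by (simp only: sum_eq sum_c)
  moreover have "card (nsets S 2) + card Z = card (pairs_n n)"
  proof -
    have sub: "nsets S 2 \<subseteq> pairs_n n"
      unfolding pairs_n_eq_nsets using S by (rule nsets_mono)
    then have "card (nsets S 2) \<le> card (pairs_n n)"
      by (rule card_mono[OF finite_pairs_n])
    then show ?thesis
      unfolding Z_def using sub by (simp add: card_Diff_subset finite_subset)
  qed
  ultimately show ?thesis
    by (simp flip: power_add add: mult.assoc)
qed

section \<open>Parity classes of optimal codes\<close>

definition add_flips :: "'e \<Rightarrow> 'e set set \<Rightarrow> 'e set set" where
  "add_flips t \<C> = \<C> \<union> (\<lambda>y. symdiff y {t}) ` \<C>"

lemma mem_add_flipsE:
  assumes "u \<in> add_flips t \<C>"
  obtains y b where "y \<in> \<C>" "b \<in> {{}, {t}}" "u = symdiff y b"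
  using assms unfolding add_flips_def by (metis UnE imageE insertCI symdiff_empty_right)

lemma add_flips_disjoint_inj:
  assumes "\<forall>y\<in>\<C>. finite y \<and> even (card y) = p"
  shows "\<C> \<inter> (\<lambda>y. symdiff y {t}) ` \<C> = {}" and "inj_on (\<lambda>y. symdiff y {t}) \<C>"
proof -
  have "symdiff y {t} \<notin> \<C>" if "y \<in> \<C>" for y
    using that assms even_card_symdiff_singleton[of y t] by auto
  then show "\<C> \<inter> (\<lambda>y. symdiff y {t}) ` \<C> = {}"
    by blast
  show "inj_on (\<lambda>y. symdiff y {t}) \<C>"
    by (rule inj_onI) (metis symdiff_cancel_right)
qed

lemma card_add_flips:
  assumes "finite \<C>" "\<forall>y\<in>\<C>. finite y \<and> even (card y) = p"
  shows "card (add_flips t \<C>) = 2 * card \<C>"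
  using card_Un_disjoint[OF assms(1) finite_imageI[OF assms(1)] add_flips_disjoint_inj(1)[OF assms(2)]]
    card_image[OF add_flips_disjoint_inj(2)[OF assms(2)]]
  by (simp add: add_flips_def)

lemma sum_walsh_add_flips:
  assumes "finite \<C>" "\<forall>y\<in>\<C>. finite y \<and> even (card y) = p" "finite Q" "t \<notin> Q"
  shows "(\<Sum>y\<in>add_flips t \<C>. walsh Q y) = 2 * (\<Sum>y\<in>\<C>. walsh Q y)"
proof -
  have "(\<Sum>y\<in>add_flips t \<C>. walsh Q y)
      = (\<Sum>y\<in>\<C>. walsh Q y) + (\<Sum>y\<in>(\<lambda>y. symdiff y {t}) ` \<C>. walsh Q y)"
    unfolding add_flips_def
    by (rule sum.union_disjoint[OF assms(1) finite_imageI[OF assms(1)] add_flips_disjoint_inj(1)[OF assms(2)]])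
  also have "(\<Sum>y\<in>(\<lambda>y. symdiff y {t}) ` \<C>. walsh Q y) = (\<Sum>y\<in>\<C>. walsh Q (symdiff y {t}))"
    by (rule sum.reindex[OF add_flips_disjoint_inj(2)[OF assms(2)], unfolded comp_def])
  also have "\<dots> = (\<Sum>y\<in>\<C>. walsh Q y)"
    using assms(3,4) by (intro sum.cong refl) (simp add: walsh_symdiff, simp add: walsh_def)
  finally show ?thesis
    by simp
qed

lemma H_code_add_flips:
  assumes H: "\<forall>K\<in>\<H>. nonempty_loopless_even K" and code: "H_code \<H> n \<C>"
    and parity: "\<forall>y\<in>\<C>. even (card y) = p" and t: "t \<in> pairs_n n"
  shows "H_code \<H> n (add_flips t \<C>)"
  unfolding H_code_iff H_code_family_def
proof (intro conjI ballI)
  have C: "\<C> \<subseteq> Pow (pairs_n n)" "H_code_family \<H> \<C>"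
    using code by (simp_all add: H_code_iff)
  then show sub: "add_flips t \<C> \<subseteq> Pow (pairs_n n)"
    using t by (auto simp: add_flips_def symdiff_def)
  fix u1 u2 K assume u: "u1 \<in> add_flips t \<C>" "u2 \<in> add_flips t \<C>" and K: "K \<in> \<H>"
  obtain y1 b1 where y1: "y1 \<in> \<C>" "b1 \<in> {{}, {t}}" "u1 = symdiff y1 b1"
    using u(1) by (rule mem_add_flipsE)
  obtain y2 b2 where y2: "y2 \<in> \<C>" "b2 \<in> {{}, {t}}" "u2 = symdiff y2 b2"
    using u(2) by (rule mem_add_flipsE)
  have sd: "symdiff u1 u2 = symdiff (symdiff y1 y2) (symdiff b1 b2)"
    unfolding y1(3) y2(3) by (auto simp: symdiff_def)
  show "\<not> graph_iso (symdiff u1 u2) K"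
  proof (cases "b1 = b2")
    case True
    then have "symdiff u1 u2 = symdiff y1 y2"
      using sd by (simp add: symdiff_def)
    then show ?thesis
      using y1(1) y2(1) K C(2) unfolding H_code_family_def by metis
  next
    case False
    then have "symdiff b1 b2 = {t}"
      using y1(2) y2(2) by (auto simp: symdiff_def)
    moreover have "finite y1" "finite y2"
      using y1(1) y2(1) C(1) by (auto intro: finite_subset[OF _ finite_pairs_n])
    ultimately have "odd (card (symdiff u1 u2))"
      using sd parity y1(1) y2(1) by (simp add: even_card_symdiff even_card_symdiff_singleton)
    moreover have "\<forall>e\<in>symdiff u1 u2. card e = 2"
      using u sub unfolding symdiff_def pairs_n_def by blast
    ultimately show ?thesis
      using H K not_graph_iso_if_odd_card by blast
  qed
qed

lemma card_parity_class_optimal: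
  assumes H: "\<forall>K\<in>\<H>. nonempty_loopless_even K" and code: "H_code \<H> n \<G>"
    and opt: "Pn n \<G> = delta_n n \<H>" and t: "t \<in> pairs_n n"
  shows "2 * card {y\<in>\<G>. even (card y) = p} = card \<G>"
proof -
  let ?C = "\<lambda>q. {y\<in>\<G>. even (card y) = q}"
  have finG: "finite \<G>"
    using code by (rule finite_if_H_code)
  have fin: "\<forall>y\<in>\<G>. finite y"
    using code by (auto simp: H_code_iff intro: finite_subset[OF _ finite_pairs_n])
  have le: "2 * card (?C q) \<le> card \<G>" for q
  proof -
    have "H_code \<H> n (add_flips t (?C q))"
      by (rule H_code_add_flips[OF H H_code_subset[OF code] _ t]) auto
    then have "real (card (add_flips t (?C q))) \<le> card \<G>"
      using card_le_delta_n card_eq_delta_n[OF code opt] by simp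
    moreover have "card (add_flips t (?C q)) = 2 * card (?C q)"
      using finG fin by (intro card_add_flips[where p = q]) auto
    ultimately show ?thesis
      by linarith
  qed
  have "?C p \<union> ?C (\<not> p) = \<G>" "?C p \<inter> ?C (\<not> p) = {}"
    by auto
  then have "card (?C p) + card (?C (\<not> p)) = card \<G>"
    using card_Un_disjoint[of "?C p" "?C (\<not> p)"] finG by simp
  then show ?thesis
    using le[of p] le[of "\<not> p"] by linarith
qed

lemma H_code_add_flips_parity_class_optimal:
  assumes H: "\<forall>K\<in>\<H>. nonempty_loopless_even K" and code: "H_code \<H> n \<G>"
    and opt: "Pn n \<G> = delta_n n \<H>" and t: "t \<in> pairs_n n"
  shows "H_code \<H> n (add_flips t {y\<in>\<G>. even (card y) = p})"
    and "card (add_flips t {y\<in>\<G>. even (card y) = p}) = card \<G>"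
proof -
  show "H_code \<H> n (add_flips t {y\<in>\<G>. even (card y) = p})"
    by (rule H_code_add_flips[OF H H_code_subset[OF code] _ t, where p = p]) auto
  have "finite \<G>"
    using code by (rule finite_if_H_code)
  moreover have "\<forall>y\<in>\<G>. finite y"
    using code by (auto simp: H_code_iff intro: finite_subset[OF _ finite_pairs_n])
  ultimately have "card (add_flips t {y\<in>\<G>. even (card y) = p}) = 2 * card {y\<in>\<G>. even (card y) = p}"
    by (intro card_add_flips[where p = p]) auto
  also have "\<dots> = card \<G>"
    by (rule card_parity_class_optimal[OF H code opt t])
  finally show "card (add_flips t {y\<in>\<G>. even (card y) = p}) = card \<G>" .
qed

lemma sum_walsh_eq_add_flips_diff:
  assumes P: "finite P" "\<G> \<subseteq> Pow P" and R: "t \<in> R" "R \<subseteq> P"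
  shows "2 * (\<Sum>y\<in>\<G>. walsh R y)
    = (\<Sum>y\<in>add_flips t {y\<in>\<G>. even (card y)}. walsh (P - R) y)
    - (\<Sum>y\<in>add_flips t {y\<in>\<G>. odd (card y)}. walsh (P - R) y)"
proof -
  let ?E = "{y\<in>\<G>. even (card y)}" and ?O = "{y\<in>\<G>. odd (card y)}"
  have finG: "finite \<G>"
    using P by (simp add: finite_subset)
  have fin: "\<forall>y\<in>\<G>. finite y"
    using P by (auto intro: finite_subset)
  have tQ: "t \<notin> P - R" "finite (P - R)"
    using P R by auto
  have "(\<Sum>y\<in>\<G>. walsh R y) = (\<Sum>y\<in>?E. walsh R y) + (\<Sum>y\<in>?O. walsh R y)"
  proof -
    have "\<G> = ?E \<union> ?O"
      by auto
    then show ?thesis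
      using finG by (simp add: sum.union_disjoint[symmetric] disjoint_iff)
  qed
  also have "\<dots> = (\<Sum>y\<in>?E. walsh (P - R) y) - (\<Sum>y\<in>?O. walsh (P - R) y)"
  proof -
    have sign: "walsh R y = (-1) ^ card y * walsh (P - R) y" if "y \<in> \<G>" for y
      using walsh_eq_sign_mult_walsh_Diff[OF P(1) R(2)] that P(2) by blast
    have "(\<Sum>y\<in>?E. walsh R y) = (\<Sum>y\<in>?E. walsh (P - R) y)"
      by (rule sum.cong) (simp_all add: sign)
    moreover have "(\<Sum>y\<in>?O. walsh R y) = (\<Sum>y\<in>?O. - walsh (P - R) y)"
      by (rule sum.cong) (simp_all add: sign)
    ultimately show ?thesis
      by (simp add: sum_negf)
  qed
  finally show ?thesis
    using sum_walsh_add_flips[where p = True, OF _ _ tQ(2) tQ(1)] sum_walsh_add_flips[where p = False, OF _ _ tQ(2) tQ(1)]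
      finG fin by simp
qed

lemma abs_sum_walsh_optimal_code_le_if_clique:
  assumes H: "\<forall>K\<in>\<H>. nonempty_loopless_even K" and code: "H_code \<H> n \<G>"
    and opt: "Pn n \<G> = delta_n n \<H>" and S: "S \<subseteq> {1..n}"
    and R: "R \<subseteq> pairs_n n" "R \<noteq> {}" "nsets S 2 \<subseteq> R"
  shows "\<bar>\<Sum>y\<in>\<G>. walsh R y\<bar> \<le> max 0 (delta_n (card S) \<H> * 2 ^ card (pairs_n n) - card \<G>)"
proof -
  obtain t where t: "t \<in> R"
    using R(2) by blast
  then have "t \<in> pairs_n n"
    using R(1) by blast
  note D = H_code_add_flips_parity_class_optimal[OF H code opt this]
  define Q where "Q = pairs_n n - R"
  let ?D = "\<lambda>p. add_flips t {y\<in>\<G>. even (card y) = p}"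
  have eq: "2 * (\<Sum>y\<in>\<G>. walsh R y) = (\<Sum>y\<in>?D True. walsh Q y) - (\<Sum>y\<in>?D False. walsh Q y)"
    using sum_walsh_eq_add_flips_diff[OF finite_pairs_n _ t R(1)] code by (simp add: H_code_iff Q_def)
  show ?thesis
  proof (cases "Q = {}")
    case True
    then have "(\<Sum>y\<in>?D p. walsh Q y) = card \<G>" for p
      using D(2) by simp
    from this[of True] this[of False] show ?thesis
      using eq by simp
  next
    case False
    have "\<bar>\<Sum>y\<in>?D p. walsh Q y\<bar> \<le> delta_n (card S) \<H> * 2 ^ card (pairs_n n) - card \<G>" for p
      using abs_sum_walsh_H_code_le_if_indep[OF D(1) S _ False] R(3) D(2) by (auto simp: Q_def)
    from this[of True] this[of False] have "\<bar>\<Sum>y\<in>\<G>. walsh R y\<bar> \<le> delta_n (card S) \<H> * 2 ^ card (pairs_n n) - card \<G>"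
      using eq by (simp only: abs_le_iff) linarith
    then show ?thesis
      by simp
  qed
qed

section \<open>Fourier coefficients of optimal codes\<close>

lemma abs_sum_walsh_optimal_code_le:
  assumes H: "\<forall>K\<in>\<H>. nonempty_loopless_even K" and code: "H_code \<H> n \<G>"
    and opt: "Pn n \<G> = delta_n n \<H>" and R: "R \<subseteq> pairs_n n" "R \<noteq> {}"
    and S: "S \<subseteq> {1..n}" "clique S R \<or> indep S R"
  shows "\<bar>\<Sum>y\<in>\<G>. walsh R y\<bar> \<le> max 0 (delta_n (card S) \<H> - delta_n n \<H>) * 2 ^ card (pairs_n n)"
proof -
  have "\<bar>\<Sum>y\<in>\<G>. walsh R y\<bar> \<le> max 0 (delta_n (card S) \<H> * 2 ^ card (pairs_n n) - card \<G>)"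
    using S(2)
  proof
    assume "clique S R"
    then have "nsets S 2 \<subseteq> R"
      by (auto simp: clique_def elim!: nsets2_E)
    then show ?thesis
      by (rule abs_sum_walsh_optimal_code_le_if_clique[OF H code opt S(1) R])
  next
    assume "indep S R"
    then have "R \<inter> nsets S 2 = {}"
      by (auto simp: indep_def elim!: nsets2_E)
    then show ?thesis
      using abs_sum_walsh_H_code_le_if_indep[OF code S(1) R] by simp
  qed
  then show ?thesis
    by (auto simp: card_eq_delta_n[OF code opt] max_def left_diff_distrib)
qed

lemma walsh_coeff_centered_indicator:
  assumes "finite P" "\<G> \<subseteq> Pow P" "R \<subseteq> P"
  shows "walsh_coeff P (\<lambda>y. (if y \<in> \<G> then 1 else 0) - p) R
    = (\<Sum>y\<in>\<G>. walsh R y) - p * (if R = {} then 2 ^ card P else 0)"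
proof -
  have "walsh_coeff P (\<lambda>y. (if y \<in> \<G> then 1 else 0) - p) R
      = (\<Sum>y\<in>Pow P. (if y \<in> \<G> then walsh R y else 0) - p * walsh R y)"
    unfolding walsh_coeff_def by (rule sum.cong) (auto simp: algebra_simps)
  also have "\<dots> = (\<Sum>y\<in>Pow P. if y \<in> \<G> then walsh R y else 0) - p * (\<Sum>y\<in>Pow P. walsh R y)"
    by (simp add: sum_subtractf sum_distrib_left)
  also have "(\<Sum>y\<in>Pow P. if y \<in> \<G> then walsh R y else 0) = (\<Sum>y\<in>\<G>. walsh R y)"
    using assms by (simp add: sum.inter_restrict[symmetric] Int_absorb1)
  finally show ?thesis
    using assms by (simp add: sum_walsh)
qed

lemma abs_walsh_coeff_optimal_code_le:
  assumes H: "\<forall>K\<in>\<H>. nonempty_loopless_even K" and code: "H_code \<H> n \<G>"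
    and opt: "Pn n \<G> = delta_n n \<H>"
    and ramsey: "\<And>E. \<exists>S\<subseteq>{1..n}. card S = m \<and> (clique S E \<or> indep S E)"
    and R: "R \<subseteq> pairs_n n"
  shows "\<bar>walsh_coeff (pairs_n n) (\<lambda>y. (if y \<in> \<G> then 1 else 0) - Pn n \<G>) R\<bar>
    \<le> max 0 (delta_n m \<H> - delta_n n \<H>) * 2 ^ card (pairs_n n)"
proof -
  have G: "\<G> \<subseteq> Pow (pairs_n n)"
    using code by (simp add: H_code_iff)
  show ?thesis
  proof (cases "R = {}")
    case True
    then show ?thesis
      using walsh_coeff_centered_indicator[OF finite_pairs_n G R] card_eq_delta_n[OF code opt] opt
      by simp
  next
    case False
    obtain S where "S \<subseteq> {1..n}" "card S = m" "clique S R \<or> indep S R"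
      using ramsey by blast
    then show ?thesis
      using walsh_coeff_centered_indicator[OF finite_pairs_n G R]
        abs_sum_walsh_optimal_code_le[OF H code opt R False] False
      by auto
  qed
qed

lemma gowers_norm_optimal_code_le:
  assumes H: "\<forall>K\<in>\<H>. nonempty_loopless_even K" and code: "H_code \<H> n \<G>"
    and opt: "Pn n \<G> = delta_n n \<H>"
    and ramsey: "\<And>E. \<exists>S\<subseteq>{1..n}. card S = m \<and> (clique S E \<or> indep S E)"
  shows "gowers_norm (pairs_n n) 2 (\<lambda>G. complex_of_real ((if G \<in> \<G> then 1 else 0) - Pn n \<G>))
    \<le> sqrt (max 0 (delta_n m \<H> - delta_n n \<H>))"
  using abs_walsh_coeff_optimal_code_le[OF H code opt ramsey] Pn_bounds[of n \<G>]
  by (intro gowers_norm_2_le_sqrt) auto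

theorem theorem1p12:
  fixes \<H> :: "'a set set set"
  assumes "\<forall>K\<in>\<H>. nonempty_loopless_even K"
  shows "\<forall>\<epsilon>>0. \<exists>n0::nat. n0 > 0 \<and> (\<forall>n\<ge>n0. \<forall>\<G>.
           H_code \<H> n \<G> \<and> Pn n \<G> = delta_n n \<H> \<longrightarrow>
           gowers_norm (pairs_n n) 2
             (\<lambda>G. complex_of_real ((if G \<in> \<G> then 1 else 0) - Pn n \<G>)) \<le> \<epsilon>)"
proof (intro allI impI)
  fix \<epsilon> :: real assume "\<epsilon> > 0"
  then obtain m where m: "\<forall>n. delta_n m \<H> \<le> delta_n n \<H> + \<epsilon>\<^sup>2"
    using ex_delta_n_le_add[of "\<epsilon>\<^sup>2"] by auto
  obtain r where "r \<ge> 1" and ramsey: "\<forall>(V::nat set) E. finite V \<and> card V \<ge> r \<longrightarrow>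
      (\<exists>S\<subseteq>V. card S = m \<and> clique S E \<or> card S = m \<and> indep S E)"
    using ramsey2[of m m] by blast
  show "\<exists>n0::nat. n0 > 0 \<and> (\<forall>n\<ge>n0. \<forall>\<G>. H_code \<H> n \<G> \<and> Pn n \<G> = delta_n n \<H> \<longrightarrow>
      gowers_norm (pairs_n n) 2 (\<lambda>G. complex_of_real ((if G \<in> \<G> then 1 else 0) - Pn n \<G>)) \<le> \<epsilon>)"
  proof (intro exI conjI allI impI)
    show "r > 0"
      using \<open>r \<ge> 1\<close> by simp
    fix n \<G> assume "r \<le> n" and "H_code \<H> n \<G> \<and> Pn n \<G> = delta_n n \<H>"
    moreover have "\<exists>S\<subseteq>{1..n}. card S = m \<and> (clique S E \<or> indep S E)" for E
      using ramsey[rule_format, of "{1..n}" E] \<open>r \<le> n\<close> by auto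
    ultimately have "gowers_norm (pairs_n n) 2 (\<lambda>G. complex_of_real ((if G \<in> \<G> then 1 else 0) - Pn n \<G>))
        \<le> sqrt (max 0 (delta_n m \<H> - delta_n n \<H>))"
      using gowers_norm_optimal_code_le[OF assms] by blast
    also have "\<dots> \<le> sqrt (\<epsilon>\<^sup>2)"
      using m[rule_format, of n] by (intro real_sqrt_le_mono) simp
    finally show "gowers_norm (pairs_n n) 2 (\<lambda>G. complex_of_real ((if G \<in> \<G> then 1 else 0) - Pn n \<G>))
        \<le> \<epsilon>"
      using \<open>\<epsilon> > 0\<close> by simp
  qed
qed

end
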